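(* Let $k\ge 3$ and let $n\ge k-1$ be an integer. If $\nu_k(n)=0$, then $n-k+3$ is prime.
   Context: For an integer $k\ge 3$ and a positive integer $n$, $\nu_k(n)$ denotes the number of $k$-tuples of integers $(x_1,\dots,x_k)$ with $1\le x_1\le x_2\le\dots\le x_k$ such that $x_1x_2\cdots x_k+x_1+x_2+\dots+x_k=n$. *)

theory Defs
  imports "HOL-Computational_Algebra.Primes"
begin

definition nu :: "nat \<Rightarrow> nat \<Rightarrow> nat" where
  "nu k n = card {xs :: nat list. length xs = k \<and> sorted xs \<and> (\<forall>x\<in>set xs. 1 \<le> x)
                    \<and> prod_list xs + sum_list xs = n}"

end

theory Submission
  imports Defs
begin

text \<open>If \<open>n + 3 - k = p * q\<close> with \<open>2 \<le> p \<le> q\<close>, then the tuple \<open>(1, \<dots>, 1, p - 1, q - 1)\<close>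
  is a solution, since \<open>(p - 1)(q - 1) + (p - 1) + (q - 1) + (k - 2) = p q + k - 3 = n\<close>.\<close>

definition nu_tuples :: "nat \<Rightarrow> nat \<Rightarrow> nat list set" where
  "nu_tuples k n = {xs. length xs = k \<and> sorted xs \<and> (\<forall>x\<in>set xs. 1 \<le> x)
                        \<and> prod_list xs + sum_list xs = n}"

lemma finite_nu_tuples: "finite (nu_tuples k n)"
proof (rule finite_subset)
  show "nu_tuples k n \<subseteq> {xs. set xs \<subseteq> {..n} \<and> length xs = k}"
  proof
    fix xs assume "xs \<in> nu_tuples k n"
    hence "\<forall>x\<in>set xs. x \<le> sum_list xs" "sum_list xs \<le> n" "length xs = k"
      by (auto simp: nu_tuples_def member_le_sum_list)
    thus "xs \<in> {xs. set xs \<subseteq> {..n} \<and> length xs = k}" by fastforce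
  qed
  show "finite {xs. set xs \<subseteq> {..n} \<and> length xs = k}"
    by (rule finite_lists_length_eq) simp
qed

lemma nu_pos_iff: "nu k n > 0 \<longleftrightarrow> nu_tuples k n \<noteq> {}"
proof -
  have "nu k n = card (nu_tuples k n)" by (simp add: nu_def nu_tuples_def)
  then show ?thesis using finite_nu_tuples[of k n] by (simp add: card_gt_0_iff)
qed

lemma replicate_one_append_pair_in_nu_tuples:
  fixes k n x y :: nat
  assumes "2 \<le> k" and "1 \<le> x" and "x \<le> y" and "n + 3 = (x + 1) * (y + 1) + k"
  shows "replicate (k - 2) 1 @ [x, y] \<in> nu_tuples k n"
proof -
  have "prod_list (replicate (k - 2) 1 @ [x, y]) + sum_list (replicate (k - 2) 1 @ [x, y])
        = x * y + (k - 2) + x + y"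
    by (simp add: sum_list_replicate)
  also have "\<dots> = n" using assms by (simp add: algebra_simps)
  finally show ?thesis
    using assms by (auto simp: nu_tuples_def sorted_append)
qed

lemma composite_nat_factors:
  fixes m :: nat
  assumes "2 \<le> m" and "\<not> prime m"
  obtains p q where "2 \<le> p" and "p \<le> q" and "m = p * q"
proof -
  obtain d where d: "d dvd m" "d \<noteq> 1" "d \<noteq> m"
    using assms unfolding prime_nat_iff by auto
  then obtain e where e: "m = d * e" by blast
  with assms d have "d \<noteq> 0" "e \<noteq> 0" "e \<noteq> 1" by auto
  with d(2) have "2 \<le> d" "2 \<le> e" by linarith+
  then show ?thesis
    using that[of "min d e" "max d e"] e by (auto simp: min_def max_def mult.commute)
qed

theorem proposition2:
  fixes k n :: nat
  assumes "k \<ge> 3" and "n + 1 \<ge> k" and "nu k n = 0"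
  shows "prime (n + 3 - k)"
proof (rule ccontr)
  assume "\<not> prime (n + 3 - k)"
  moreover have "2 \<le> n + 3 - k" using assms(2) by simp
  ultimately obtain p q where pq: "2 \<le> p" "p \<le> q" "n + 3 - k = p * q"
    using composite_nat_factors by blast
  have "n + 3 = (p - 1 + 1) * (q - 1 + 1) + k"
    using pq assms(2) by simp
  then have "replicate (k - 2) 1 @ [p - 1, q - 1] \<in> nu_tuples k n"
    using pq assms(1) by (intro replicate_one_append_pair_in_nu_tuples) auto
  then have "nu k n > 0" by (auto simp: nu_pos_iff)
  with assms(3) show False by simp
qed

end
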